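(* Let $\pi$ be a set of primes, $G$ a finite group with the property $C_\pi$, $A$ a normal subgroup of $G$ and $H$ a $\pi$-Hall subgroup of $G$. Then both $N_G(HA)$ and $N_G(H\cap A)$ have the property $C_\pi$.
   Context: All groups are finite. A subgroup $H$ of $G$ is a $\pi$-Hall subgroup if all prime divisors of $|H|$ lie in $\pi$ and no prime divisor of $|G:H|$ lies in $\pi$. $G$ has the property $E_\pi$ if it contains a $\pi$-Hall subgroup; $G$ has the property $C_\pi$ if it has $E_\pi$ and any two $\pi$-Hall subgroups of $G$ are conjugate in $G$. *)

theory Defs
  imports "HOL-Algebra.Algebra" "HOL-Computational_Algebra.Primes"
begin

definition pi_Hall :: "nat set \<Rightarrow> ('a, 'b) monoid_scheme \<Rightarrow> 'a set \<Rightarrow> bool" where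
  "pi_Hall \<pi> G H \<longleftrightarrow> subgroup H G
     \<and> (\<forall>p. Factorial_Ring.prime p \<and> p dvd card H \<longrightarrow> p \<in> \<pi>)
     \<and> (\<forall>p. Factorial_Ring.prime p \<and> p dvd card (rcosets\<^bsub>G\<^esub> H) \<longrightarrow> p \<notin> \<pi>)"

definition has_E_pi :: "nat set \<Rightarrow> ('a, 'b) monoid_scheme \<Rightarrow> bool" where
  "has_E_pi \<pi> G \<longleftrightarrow> (\<exists>H. pi_Hall \<pi> G H)"

definition has_C_pi :: "nat set \<Rightarrow> ('a, 'b) monoid_scheme \<Rightarrow> bool" where
  "has_C_pi \<pi> G \<longleftrightarrow> has_E_pi \<pi> G
     \<and> (\<forall>H K. pi_Hall \<pi> G H \<and> pi_Hall \<pi> G K \<longrightarrow>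
          (\<exists>g\<in>carrier G. K = g <#\<^bsub>G\<^esub> H #>\<^bsub>G\<^esub> inv\<^bsub>G\<^esub> g))"

end

theory Submission
  imports Defs
begin

text \<open>
  Let M be a subgroup of the finite group G containing the \<pi>-Hall subgroup H
  and such that every g \<in> G with gHg\<inverse> \<subseteq> M already lies in M.  Then M inherits C\<pi> from G:
  a \<pi>-Hall subgroup of M has the order of H, hence is \<pi>-Hall in G, hence is gHg\<inverse> for some
  g \<in> G, and the hypothesis on M forces g \<in> M.  It remains to check this closure
  property for M = N(HA) and M = N(H \<inter> A).  Both rest on the product formula
  |NK| |K \<inter> N| = |N| |K| for a subgroup K normalising a subgroup N:
  - a \<pi>-subgroup K normalising an overgroup Y of H lies in Y, because |YK : Y| divides
    both the \<pi>-number |K| and the \<pi>'-number |G : H|;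
  - a \<pi>-Hall subgroup K contains every \<pi>-subgroup D it normalises, since DK is a \<pi>-subgroup
    and \<pi>-subgroups are not larger than \<pi>-Hall subgroups.
\<close>

section \<open>\<pi>-numbers\<close>

definition pi_number :: "nat set \<Rightarrow> nat \<Rightarrow> bool" where
  "pi_number \<pi> n \<longleftrightarrow> (\<forall>p. Factorial_Ring.prime p \<and> p dvd n \<longrightarrow> p \<in> \<pi>)"

definition pi'_number :: "nat set \<Rightarrow> nat \<Rightarrow> bool" where
  "pi'_number \<pi> n \<longleftrightarrow> (\<forall>p. Factorial_Ring.prime p \<and> p dvd n \<longrightarrow> p \<notin> \<pi>)"

lemma pi_Hall_iff:
  "pi_Hall \<pi> G H \<longleftrightarrow> subgroup H G \<and> pi_number \<pi> (card H) \<and> pi'_number \<pi> (card (rcosets\<^bsub>G\<^esub> H))"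
  unfolding pi_Hall_def pi_number_def pi'_number_def by blast

lemma pi_number_dvd: "pi_number \<pi> n \<Longrightarrow> m dvd n \<Longrightarrow> pi_number \<pi> m"
  unfolding pi_number_def using dvd_trans by blast

lemma pi'_number_dvd: "pi'_number \<pi> n \<Longrightarrow> m dvd n \<Longrightarrow> pi'_number \<pi> m"
  unfolding pi'_number_def using dvd_trans by blast

lemma pi_number_mult: "pi_number \<pi> a \<Longrightarrow> pi_number \<pi> b \<Longrightarrow> pi_number \<pi> (a * b)"
  unfolding pi_number_def by (auto simp: prime_dvd_mult_iff)

lemma pi_pi'_coprime:
  assumes "pi_number \<pi> a" "pi'_number \<pi> b" shows "coprime a b"
proof (rule ccontr)
  assume "\<not> coprime a b"
  then obtain p where "Factorial_Ring.prime p" "p dvd gcd a b"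
    using prime_factor_nat by (metis coprime_iff_gcd_eq_1)
  then show False using assms unfolding pi_number_def pi'_number_def by auto
qed

lemma pi_pi'_eq_1: "pi_number \<pi> n \<Longrightarrow> pi'_number \<pi> n \<Longrightarrow> n = 1"
  using pi_pi'_coprime[of \<pi> n n] by simp

section \<open>Orders and indices of subgroups\<close>

context group
begin

lemma card_subgroup_pos:
  assumes "finite (carrier G)" "subgroup H G" shows "card H > 0"
  using assms subgroup.one_closed subgroup.subset by (metis card_gt_0_iff empty_iff finite_subset)

lemma lagrange_in_subgroup:
  assumes "subgroup H G" "subgroup K G" "H \<subseteq> K"
  shows "card (rcosets\<^bsub>G\<lparr>carrier := K\<rparr>\<^esub> H) * card H = card K"
proof -
  interpret K: group "G\<lparr>carrier := K\<rparr>" using subgroup_imp_group[OF assms(2)] .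
  show ?thesis using K.lagrange[OF subgroup_incl[OF assms]] by (simp add: order_def)
qed

lemma index_tower:
  assumes fin: "finite (carrier G)" and H: "subgroup H G" and K: "subgroup K G" and HK: "H \<subseteq> K"
  shows "card (rcosets H) = card (rcosets\<^bsub>G\<lparr>carrier := K\<rparr>\<^esub> H) * card (rcosets K)"
proof -
  have "card (rcosets H) * card H = card (rcosets K) * card K"
    using lagrange[OF H] lagrange[OF K] by simp
  also have "\<dots> = (card (rcosets\<^bsub>G\<lparr>carrier := K\<rparr>\<^esub> H) * card (rcosets K)) * card H"
    by (simp flip: lagrange_in_subgroup[OF H K HK])
  finally show ?thesis using card_subgroup_pos[OF fin H] by simp
qed

lemma pi_Hall_in_subgroup:
  assumes fin: "finite (carrier G)" and H: "pi_Hall \<pi> G H" and M: "subgroup M G" and HM: "H \<subseteq> M"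
  shows "pi_Hall \<pi> (G\<lparr>carrier := M\<rparr>) H"
proof -
  have sH: "subgroup H G" using H pi_Hall_iff by blast
  have "pi'_number \<pi> (card (rcosets\<^bsub>G\<lparr>carrier := M\<rparr>\<^esub> H))"
    using H index_tower[OF fin sH M HM] pi'_number_dvd unfolding pi_Hall_iff by (metis dvd_triv_left)
  then show ?thesis using H subgroup_incl[OF sH M HM] unfolding pi_Hall_iff by blast
qed

lemma pi'_index_of_overgroup:
  assumes fin: "finite (carrier G)" and H: "pi_Hall \<pi> G H" and Y: "subgroup Y G" and HY: "H \<subseteq> Y"
  shows "pi'_number \<pi> (card (rcosets Y))"
  using H index_tower[OF fin _ Y HY] pi'_number_dvd unfolding pi_Hall_iff by (metis dvd_triv_right)

lemma pi_subgroup_card_dvd: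
  assumes H: "pi_Hall \<pi> G H" and L: "subgroup L G" and pL: "pi_number \<pi> (card L)"
  shows "card L dvd card H"
proof -
  have sH: "subgroup H G" and cp: "pi'_number \<pi> (card (rcosets H))" using H pi_Hall_iff by auto
  have "card L dvd card (rcosets H) * card H"
    using lagrange[OF L] lagrange[OF sH] by (metis dvd_triv_right)
  then show ?thesis using pi_pi'_coprime[OF pL cp] by (simp add: coprime_dvd_mult_right_iff)
qed

lemma pi_subgroup_card_le:
  assumes "finite (carrier G)" "pi_Hall \<pi> G H" "subgroup L G" "pi_number \<pi> (card L)"
  shows "card L \<le> card H"
  using assms pi_subgroup_card_dvd card_subgroup_pos pi_Hall_iff dvd_imp_le by metis

lemma pi_Hall_of_card:
  assumes fin: "finite (carrier G)" and H: "pi_Hall \<pi> G H" and K: "subgroup K G"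
    and c: "card K = card H"
  shows "pi_Hall \<pi> G K"
proof -
  have sH: "subgroup H G" using H pi_Hall_iff by blast
  have "card (rcosets K) * card H = card (rcosets H) * card H"
    using lagrange[OF K] lagrange[OF sH] c by simp
  then have "card (rcosets K) = card (rcosets H)" using card_subgroup_pos[OF fin sH] by simp
  then show ?thesis using H K c unfolding pi_Hall_iff by auto
qed

lemma pi_Hall_of_subgroup:
  assumes fin: "finite (carrier G)" and H: "pi_Hall \<pi> G H" and M: "subgroup M G" and HM: "H \<subseteq> M"
    and K: "pi_Hall \<pi> (G\<lparr>carrier := M\<rparr>) K"
  shows "pi_Hall \<pi> G K"
proof -
  interpret M: group "G\<lparr>carrier := M\<rparr>" using subgroup_imp_group[OF M] .
  have finM: "finite (carrier (G\<lparr>carrier := M\<rparr>))"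
    using finite_subset[OF subgroup.subset[OF M] fin] by simp
  have sKM: "subgroup K (G\<lparr>carrier := M\<rparr>)" using K pi_Hall_iff by blast
  have sK: "subgroup K G" using incl_subgroup[OF M sKM] .
  have "card K \<le> card H"
    using pi_subgroup_card_le[OF fin H sK] K pi_Hall_iff by blast
  moreover have "card H \<le> card K"
    using M.pi_subgroup_card_le[OF finM K] pi_Hall_in_subgroup[OF fin H M HM] pi_Hall_iff by blast
  ultimately show ?thesis using pi_Hall_of_card[OF fin H sK] by simp
qed

section \<open>Conjugates and normalisers\<close>

lemma conj_eq_image:
  assumes "g \<in> carrier G" "S \<subseteq> carrier G"
  shows "g <# S #> inv g = (\<lambda>x. g \<otimes> x \<otimes> inv g) ` S"
  unfolding l_coset_def r_coset_def by auto

lemma conj_inj_on: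
  assumes "g \<in> carrier G" "S \<subseteq> carrier G"
  shows "inj_on (\<lambda>x. g \<otimes> x \<otimes> inv g) S"
  using assms conjugation_is_inj unfolding inj_on_def by (meson subsetD)

lemma card_conj:
  assumes "g \<in> carrier G" "S \<subseteq> carrier G"
  shows "card (g <# S #> inv g) = card S"
  using conj_eq_image[OF assms] card_image[OF conj_inj_on[OF assms]] by simp

lemma conj_Int:
  assumes "g \<in> carrier G" "S \<subseteq> carrier G" "T \<subseteq> carrier G"
  shows "g <# (S \<inter> T) #> inv g = (g <# S #> inv g) \<inter> (g <# T #> inv g)"
  using assms conj_eq_image inj_on_image_Int[OF conj_inj_on[of g "carrier G"]]
  by (metis Int_absorb2 le_infI1 order_refl)

lemma conj_conj:
  assumes "g \<in> carrier G" "h \<in> carrier G" "S \<subseteq> carrier G"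
  shows "h <# (g <# S #> inv g) #> inv h = (h \<otimes> g) <# S #> inv (h \<otimes> g)"
  using assms
  by (simp add: coset_assoc l_coset_subset_G r_coset_subset_G lcos_m_assoc coset_mult_assoc
      inv_mult_group)

lemma conj_subgroup_self:
  assumes "subgroup H G" "h \<in> H"
  shows "h <# H #> inv h = H"
  using assms by (simp add: coset_join3 coset_join2 subgroup.mem_carrier subgroup.m_inv_closed)

lemma conj_normal:
  assumes A: "A \<lhd> G" and g: "g \<in> carrier G"
  shows "g <# A #> inv g = A"
proof -
  have AG: "A \<subseteq> carrier G" using normal_imp_subgroup[OF A] subgroup.subset by blast
  have "x \<in> (\<lambda>x. g \<otimes> x \<otimes> inv g) ` A" if x: "x \<in> A" for x
  proof
    show "inv g \<otimes> x \<otimes> g \<in> A" using normal.inv_op_closed1[OF A g x] .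
    show "x = g \<otimes> (inv g \<otimes> x \<otimes> g) \<otimes> inv g"
      using conjugation_is_surj[OF g] x AG by (simp add: subsetD)
  qed
  then show ?thesis
    using conj_eq_image[OF g AG] normal.inv_op_closed2[OF A g] by auto
qed

lemma mem_normalizer_iff:
  assumes "Y \<subseteq> carrier G"
  shows "g \<in> normalizer G Y \<longleftrightarrow> g \<in> carrier G \<and> g <# Y #> inv g = Y"
  using assms unfolding normalizer_def stabilizer_def by auto

lemma normalizerI_subset:
  assumes fin: "finite (carrier G)" and Y: "Y \<subseteq> carrier G" and g: "g \<in> carrier G"
    and sub: "g <# Y #> inv g \<subseteq> Y"
  shows "g \<in> normalizer G Y"
proof -
  have "g <# Y #> inv g = Y"
    using card_subset_eq[OF finite_subset[OF Y fin] sub] card_conj[OF g Y] by simp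
  then show ?thesis using mem_normalizer_iff[OF Y] g by simp
qed

section \<open>Products of subgroups\<close>

lemma subset_set_mult_left:
  assumes "N \<subseteq> carrier G" "\<one> \<in> K" shows "N \<subseteq> N <#> K"
proof
  fix x assume "x \<in> N"
  then have "x \<otimes> \<one> \<in> N <#> K" unfolding set_mult_def using assms(2) by blast
  then show "x \<in> N <#> K" using \<open>x \<in> N\<close> assms(1) by auto
qed

lemma subset_set_mult_right:
  assumes "K \<subseteq> carrier G" "\<one> \<in> N" shows "K \<subseteq> N <#> K"
proof
  fix k assume "k \<in> K"
  then have "\<one> \<otimes> k \<in> N <#> K" unfolding set_mult_def using assms(2) by blast
  then show "k \<in> N <#> K" using \<open>k \<in> K\<close> assms(1) by auto
qed

text \<open>Product formula: if K normalises N then NK is a subgroup with |NK| |K \<inter> N| = |N| |K|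
  (via the second isomorphism theorem NK/N \<cong> K/(K \<inter> N)).\<close>
lemma product_formula:
  assumes fin: "finite (carrier G)" and N: "subgroup N G" and K: "subgroup K G"
    and KN: "K \<subseteq> normalizer G N"
  shows "subgroup (N <#> K) G" and "card (N <#> K) * card (K \<inter> N) = card N * card K"
proof -
  have NG: "subgroup (normalizer G N) G"
    using normalizer_imp_subgroup[OF subgroup.subset[OF N]] .
  have KN': "subgroup K (G\<lparr>carrier := normalizer G N\<rparr>)" using subgroup_incl[OF K NG KN] .
  have "subgroup (N <#> K) (G\<lparr>carrier := normalizer G N\<rparr>)"
    using mult_norm_sub_in_sub[OF subgroup_in_normalizer[OF N] KN' NG] .
  then show NK: "subgroup (N <#> K) G" using incl_subgroup[OF NG] by blast
  have "card (rcosets\<^bsub>G\<lparr>carrier := N <#> K\<rparr>\<^esub> N) = card (rcosets\<^bsub>G\<lparr>carrier := K\<rparr>\<^esub> (K \<inter> N))"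
    using iso_same_card[OF snd_iso_thme[OF K N KN']] by (simp add: FactGroup_def)
  moreover have "N \<subseteq> N <#> K"
    using subset_set_mult_left subgroup.subset[OF N] subgroup.one_closed[OF K] .
  ultimately have "card (N <#> K) = card (rcosets\<^bsub>G\<lparr>carrier := K\<rparr>\<^esub> (K \<inter> N)) * card N"
    using lagrange_in_subgroup[OF N NK] by metis
  then show "card (N <#> K) * card (K \<inter> N) = card N * card K"
    using lagrange_in_subgroup[OF subgroups_Inter_pair[OF K N] K] by (simp add: ac_simps)
qed

section \<open>\<pi>-subgroups normalising and normalised by \<pi>-Hall subgroups\<close>

text \<open>A \<pi>-subgroup K normalising a subgroup Y that contains a \<pi>-Hall subgroup lies in Y:
  the index |YK : Y| is a \<pi>'-number and, by the product formula, divides |K|.\<close>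
lemma pi_subgroup_normalizing_overgroup:
  assumes fin: "finite (carrier G)" and H: "pi_Hall \<pi> G H" and Y: "subgroup Y G"
    and HY: "H \<subseteq> Y" and K: "subgroup K G" and pK: "pi_number \<pi> (card K)"
    and KN: "K \<subseteq> normalizer G Y"
  shows "K \<subseteq> Y"
proof -
  define P where "P = Y <#> K"
  have P: "subgroup P G" and prod: "card P * card (K \<inter> Y) = card Y * card K"
    using product_formula[OF fin Y K KN] unfolding P_def by auto
  have YP: "Y \<subseteq> P" and KP: "K \<subseteq> P" unfolding P_def
    using subset_set_mult_left subset_set_mult_right subgroup.subset subgroup.one_closed Y K by metis+
  define i where "i = card (rcosets\<^bsub>G\<lparr>carrier := P\<rparr>\<^esub> Y)"
  have "pi'_number \<pi> i"
  proof -
    have finP: "finite (carrier (G\<lparr>carrier := P\<rparr>))"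
      using finite_subset[OF subgroup.subset[OF P] fin] by simp
    show ?thesis
      using group.pi'_index_of_overgroup[OF subgroup_imp_group[OF P] finP
          pi_Hall_in_subgroup[OF fin H P] subgroup_incl[OF Y P YP] HY] HY YP
      unfolding i_def by blast
  qed
  moreover have "pi_number \<pi> i"
  proof -
    have "i * card Y = card P" using lagrange_in_subgroup[OF Y P YP] unfolding i_def .
    then have "card Y * (i * card (K \<inter> Y)) = card Y * card K"
      using prod by (metis mult.assoc mult.commute)
    then have "i * card (K \<inter> Y) = card K" using card_subgroup_pos[OF fin Y] by simp
    then show ?thesis using pi_number_dvd[OF pK] by (metis dvd_triv_left)
  qed
  ultimately have "card P = card Y"
    using pi_pi'_eq_1 lagrange_in_subgroup[OF Y P YP] unfolding i_def by (metis mult_1)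
  then have "P = Y"
    using card_subset_eq[OF finite_subset[OF subgroup.subset[OF P] fin] YP] by simp
  then show ?thesis using KP by simp
qed

text \<open>A \<pi>-Hall subgroup K contains every \<pi>-subgroup D that it normalises: DK is a
  \<pi>-subgroup containing K, so it cannot be larger than K.\<close>
lemma pi_subgroup_normalized_by_Hall:
  assumes fin: "finite (carrier G)" and K: "pi_Hall \<pi> G K" and D: "subgroup D G"
    and pD: "pi_number \<pi> (card D)" and KN: "K \<subseteq> normalizer G D"
  shows "D \<subseteq> K"
proof -
  have sK: "subgroup K G" and pK: "pi_number \<pi> (card K)" using K pi_Hall_iff by auto
  define P where "P = D <#> K"
  have P: "subgroup P G" and prod: "card P * card (K \<inter> D) = card D * card K"
    using product_formula[OF fin D sK KN] unfolding P_def by auto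
  have DP: "D \<subseteq> P" and KP: "K \<subseteq> P" unfolding P_def
    using subset_set_mult_left subset_set_mult_right subgroup.subset subgroup.one_closed D sK
    by metis+
  have "pi_number \<pi> (card P)"
    using pi_number_dvd[OF pi_number_mult[OF pD pK]] prod by (metis dvd_triv_left)
  then have "card P \<le> card K" using pi_subgroup_card_le[OF fin K P] by blast
  then have "K = P"
    using card_seteq[OF finite_subset[OF subgroup.subset[OF P] fin] KP] by blast
  then show ?thesis using DP by simp
qed

text \<open>If M contains the \<pi>-Hall subgroup H and every g with gHg\<inverse> \<subseteq> M lies in M, then M
  inherits C\<pi> from G: each \<pi>-Hall subgroup of M is gHg\<inverse> for some g, and then g \<in> M.\<close>
lemma C_pi_of_conj_closed_subgroup:
  assumes fin: "finite (carrier G)" and C: "has_C_pi \<pi> G" and H: "pi_Hall \<pi> G H"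
    and M: "subgroup M G" and HM: "H \<subseteq> M"
    and closed: "\<And>g. g \<in> carrier G \<Longrightarrow> g <# H #> inv g \<subseteq> M \<Longrightarrow> g \<in> M"
  shows "has_C_pi \<pi> (G\<lparr>carrier := M\<rparr>)"
proof -
  have HG: "H \<subseteq> carrier G" using H pi_Hall_iff subgroup.subset by blast
  have conj_H: "\<exists>g\<in>M. K = g <# H #> inv g" if K: "pi_Hall \<pi> (G\<lparr>carrier := M\<rparr>) K" for K
  proof -
    obtain g where g: "g \<in> carrier G" and Kg: "K = g <# H #> inv g"
      using C H pi_Hall_of_subgroup[OF fin H M HM K] unfolding has_C_pi_def by blast
    have "K \<subseteq> M" using K pi_Hall_iff subgroup.subset by force
    then show ?thesis using closed[OF g] Kg by blast
  qed
  have conj_in_M: "g <#\<^bsub>G\<lparr>carrier := M\<rparr>\<^esub> S #>\<^bsub>G\<lparr>carrier := M\<rparr>\<^esub> inv\<^bsub>G\<lparr>carrier := M\<rparr>\<^esub> g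
      = g <# S #> inv g" if "g \<in> M" for g S
    using m_inv_consistent[OF M that] unfolding l_coset_def r_coset_def by simp
  show ?thesis unfolding has_C_pi_def has_E_pi_def
  proof (intro conjI allI impI)
    show "\<exists>H. pi_Hall \<pi> (G\<lparr>carrier := M\<rparr>) H" using pi_Hall_in_subgroup[OF fin H M HM] by blast
    fix K1 K2 assume "pi_Hall \<pi> (G\<lparr>carrier := M\<rparr>) K1 \<and> pi_Hall \<pi> (G\<lparr>carrier := M\<rparr>) K2"
    then obtain g1 g2 where g1: "g1 \<in> M" "K1 = g1 <# H #> inv g1"
      and g2: "g2 \<in> M" "K2 = g2 <# H #> inv g2" using conj_H by blast
    have g1G: "g1 \<in> carrier G" and g2G: "g2 \<in> carrier G" using g1 g2 M subgroup.subset by blast+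
    define g where "g = g2 \<otimes> inv g1"
    have gM: "g \<in> M" unfolding g_def using g1 g2 M by (simp add: subgroup.m_closed subgroup.m_inv_closed)
    have "g \<otimes> g1 = g2" unfolding g_def using g1G g2G by (simp add: m_assoc)
    then have "K2 = g <# K1 #> inv g"
      using g1 g2 conj_conj[OF g1G _ HG, of g] gM M subgroup.subset by auto
    then show "\<exists>g\<in>carrier (G\<lparr>carrier := M\<rparr>). K2 = g <#\<^bsub>G\<lparr>carrier := M\<rparr>\<^esub> K1 #>\<^bsub>G\<lparr>carrier := M\<rparr>\<^esub> inv\<^bsub>G\<lparr>carrier := M\<rparr>\<^esub> g"
      using gM conj_in_M by auto
  qed
qed

section \<open>The normalisers of HA and of H \<inter> A\<close>

lemma normalizer_set_mult_normal:
  assumes fin: "finite (carrier G)" and H: "subgroup H G" and A: "A \<lhd> G"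
    and g: "g \<in> carrier G" and sub: "g <# H #> inv g \<subseteq> H <#> A"
  shows "g \<in> normalizer G (H <#> A)"
proof -
  have sA: "subgroup A G" using normal_imp_subgroup[OF A] .
  have HG: "H \<subseteq> carrier G" and AG: "A \<subseteq> carrier G" using H sA subgroup.subset by blast+
  have HA: "subgroup (H <#> A) G" using mult_norm_subgroup[OF A H] commut_normal[OF H A] by simp
  have HAG: "H <#> A \<subseteq> carrier G" using HA subgroup.subset by blast
  have AHA: "A \<subseteq> H <#> A" using subset_set_mult_right[OF AG subgroup.one_closed[OF H]] .
  show ?thesis
  proof (rule normalizerI_subset[OF fin HAG g], unfold conj_eq_image[OF g HAG], rule subsetI)
    fix y assume "y \<in> (\<lambda>x. g \<otimes> x \<otimes> inv g) ` (H <#> A)"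
    then obtain h a where h: "h \<in> H" and a: "a \<in> A" and y: "y = g \<otimes> (h \<otimes> a) \<otimes> inv g"
      unfolding set_mult_def by blast
    have hG: "h \<in> carrier G" and aG: "a \<in> carrier G" using h a HG AG by auto
    have "y = (g \<otimes> h \<otimes> inv g) \<otimes> (g \<otimes> a \<otimes> inv g)"
      using y g hG aG by (simp add: m_assoc flip: m_assoc[of "inv g" g])
    moreover have "g \<otimes> h \<otimes> inv g \<in> H <#> A" using sub h conj_eq_image[OF g HG] by blast
    moreover have "g \<otimes> a \<otimes> inv g \<in> H <#> A" using AHA normal.inv_op_closed2[OF A g a] by blast
    ultimately show "y \<in> H <#> A" using subgroup.m_closed[OF HA] by simp
  qed
qed

text \<open>N(HA) contains H, and every g with gHg\<inverse> \<subseteq> N(HA) lies in N(HA): the \<pi>-subgroup gHg\<inverse>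
  normalises the overgroup HA of H, so gHg\<inverse> \<subseteq> HA.\<close>
lemma normalizer_set_mult_conj_closed:
  assumes fin: "finite (carrier G)" and H: "pi_Hall \<pi> G H" and A: "A \<lhd> G"
  shows "H \<subseteq> normalizer G (H <#> A)"
    and "\<And>g. g \<in> carrier G \<Longrightarrow> g <# H #> inv g \<subseteq> normalizer G (H <#> A)
            \<Longrightarrow> g \<in> normalizer G (H <#> A)"
proof -
  have sH: "subgroup H G" and pH: "pi_number \<pi> (card H)" using H pi_Hall_iff by auto
  have HG: "H \<subseteq> carrier G" using sH subgroup.subset by blast
  have HA: "subgroup (H <#> A) G" using mult_norm_subgroup[OF A sH] commut_normal[OF sH A] by simp
  have HHA: "H \<subseteq> H <#> A"
    using subset_set_mult_left[OF HG subgroup.one_closed[OF normal_imp_subgroup[OF A]]] .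
  show "H \<subseteq> normalizer G (H <#> A)"
    using normalizer_set_mult_normal[OF fin sH A] conj_subgroup_self[OF sH] HHA HG by blast
  fix g assume g: "g \<in> carrier G" and sub: "g <# H #> inv g \<subseteq> normalizer G (H <#> A)"
  have "g <# H #> inv g \<subseteq> H <#> A"
    using pi_subgroup_normalizing_overgroup[OF fin H HA HHA subgroup_conjugation_is_surj2[OF g sH]]
      card_conj[OF g HG] pH sub by simp
  then show "g \<in> normalizer G (H <#> A)" using normalizer_set_mult_normal[OF fin sH A g] by blast
qed

text \<open>N(H \<inter> A) contains H, and every g with gHg\<inverse> \<subseteq> N(H \<inter> A) lies in N(H \<inter> A): the \<pi>-Hall
  subgroup gHg\<inverse> normalises the \<pi>-subgroup H \<inter> A, so H \<inter> A \<subseteq> gHg\<inverse> \<inter> A = g(H \<inter> A)g\<inverse>.\<close>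
lemma normalizer_Int_conj_closed:
  assumes fin: "finite (carrier G)" and H: "pi_Hall \<pi> G H" and A: "A \<lhd> G"
  shows "H \<subseteq> normalizer G (H \<inter> A)"
    and "\<And>g. g \<in> carrier G \<Longrightarrow> g <# H #> inv g \<subseteq> normalizer G (H \<inter> A)
            \<Longrightarrow> g \<in> normalizer G (H \<inter> A)"
proof -
  have sH: "subgroup H G" and pH: "pi_number \<pi> (card H)" using H pi_Hall_iff by auto
  have sA: "subgroup A G" using normal_imp_subgroup[OF A] .
  have HG: "H \<subseteq> carrier G" and AG: "A \<subseteq> carrier G" using sH sA subgroup.subset by blast+
  have D: "subgroup (H \<inter> A) G" using subgroups_Inter_pair[OF sH sA] .
  have DG: "H \<inter> A \<subseteq> carrier G" using HG by blast
  show "H \<subseteq> normalizer G (H \<inter> A)"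
  proof
    fix h assume h: "h \<in> H"
    then have hG: "h \<in> carrier G" using HG by blast
    show "h \<in> normalizer G (H \<inter> A)"
      using mem_normalizer_iff[OF DG] conj_Int[OF hG HG AG] conj_subgroup_self[OF sH h]
        conj_normal[OF A hG] hG by simp
  qed
  fix g assume g: "g \<in> carrier G" and sub: "g <# H #> inv g \<subseteq> normalizer G (H \<inter> A)"
  have "pi_Hall \<pi> G (g <# H #> inv g)"
    using pi_Hall_of_card[OF fin H subgroup_conjugation_is_surj2[OF g sH] card_conj[OF g HG]] .
  moreover have "pi_number \<pi> (card (H \<inter> A))"
    using pi_number_dvd[OF pH] lagrange_in_subgroup[OF D sH] by (metis Int_lower1 dvd_triv_right)
  ultimately have "H \<inter> A \<subseteq> g <# H #> inv g"
    using pi_subgroup_normalized_by_Hall[OF fin _ D] sub by blast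
  then have "H \<inter> A \<subseteq> g <# (H \<inter> A) #> inv g"
    using conj_Int[OF g HG AG] conj_normal[OF A g] by auto
  moreover have "finite (g <# (H \<inter> A) #> inv g)"
    using finite_subset[OF _ fin] conj_eq_image[OF g DG] DG g by auto
  ultimately have "g <# (H \<inter> A) #> inv g = H \<inter> A"
    using card_seteq card_conj[OF g DG] by (metis order_refl)
  then show "g \<in> normalizer G (H \<inter> A)" using mem_normalizer_iff[OF DG] g by simp
qed

end

theorem lemma5:
  fixes G :: "('a, 'b) monoid_scheme" and \<pi> :: "nat set" and A H :: "'a set"
  assumes "group G" and "finite (carrier G)"
    and "\<forall>p\<in>\<pi>. Factorial_Ring.prime p"
    and "has_C_pi \<pi> G"
    and "A \<lhd> G"
    and "pi_Hall \<pi> G H"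
  shows "has_C_pi \<pi> (G\<lparr>carrier := normalizer G (H <#>\<^bsub>G\<^esub> A)\<rparr>)
       \<and> has_C_pi \<pi> (G\<lparr>carrier := normalizer G (H \<inter> A)\<rparr>)"
proof
  interpret group G by fact
  note fin = assms(2) and C = assms(4) and A = assms(5) and H = assms(6)
  have HG: "H \<subseteq> carrier G" using H pi_Hall_iff subgroup.subset by blast
  show "has_C_pi \<pi> (G\<lparr>carrier := normalizer G (H <#>\<^bsub>G\<^esub> A)\<rparr>)"
  proof (rule C_pi_of_conj_closed_subgroup[OF fin C H])
    show "subgroup (normalizer G (H <#>\<^bsub>G\<^esub> A)) G"
      using normalizer_imp_subgroup setmult_subset_G HG normal_imp_subgroup[OF A] subgroup.subset
      by metis
  qed (use normalizer_set_mult_conj_closed[OF fin H A] in auto)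
  show "has_C_pi \<pi> (G\<lparr>carrier := normalizer G (H \<inter> A)\<rparr>)"
  proof (rule C_pi_of_conj_closed_subgroup[OF fin C H])
    show "subgroup (normalizer G (H \<inter> A)) G" using normalizer_imp_subgroup HG by blast
  qed (use normalizer_Int_conj_closed[OF fin H A] in auto)
qed

end
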